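(* Let $p,q\in\mathbb{R}$ with $q\neq0$ and $$\hat{\mathcal{B}}=\begin{pmatrix}p&qi&\frac{q}{6}(\sqrt5\,k+2\ell)\\ -qi&p&\frac q2 j\\ -\frac q6(\sqrt5\,k+2\ell)&-\frac q2 j&p\end{pmatrix},\qquad w_1=\begin{pmatrix}3k\\ \sqrt5 j-2i\ell\\ -7-\sqrt5 k\ell\end{pmatrix}.$$ There do not exist nonzero $u,v\in\mathbb{O}^3$ and $\mu,\nu\in\mathbb{O}$ with $\hat{\mathcal{B}}u=u\mu$, $\hat{\mathcal{B}}v=v\nu$ such that the three vectors $w_1,u,v$ are pairwise orthogonal in the sense that $(xx^\dagger)y=0$ for every ordered pair $(x,y)$ of distinct vectors among $w_1,u,v$.
   Context: $\mathbb{O}$ is the octonion algebra with real basis $1,i,j,k,\ell,i\ell,j\ell,k\ell$, obtained by Cayley–Dickson doubling of the quaternions ($ij=k$, $jk=i$, $ki=j$): $(a+b\ell)(c+d\ell)=(ac-\overline{d}b)+(da+b\overline{c})\ell$ for quaternions $a,b,c,d$. $xx^\dagger$ is the $3\times3$ matrix with entries $x_i\overline{x_j}$, and $(xx^\dagger)y$ is the matrix–vector product computed with octonionic multiplication. $u\mu$ means componentwise right multiplication. *)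

theory Defs
  imports Complex_Main
begin

datatype quat = Q real real real real

instantiation quat :: "{zero, one, plus, minus, uminus, times}"
begin
definition "0 = Q 0 0 0 0"
definition "1 = Q 1 0 0 0"
fun plus_quat where "Q a b c d + Q a' b' c' d' = Q (a+a') (b+b') (c+c') (d+d')"
fun minus_quat where "Q a b c d - Q a' b' c' d' = Q (a-a') (b-b') (c-c') (d-d')"
fun uminus_quat where "- Q a b c d = Q (-a) (-b) (-c) (-d)"
fun times_quat where
  "Q a1 b1 c1 d1 * Q a2 b2 c2 d2 =
     Q (a1*a2 - b1*b2 - c1*c2 - d1*d2)
       (a1*b2 + b1*a2 + c1*d2 - d1*c2)
       (a1*c2 - b1*d2 + c1*a2 + d1*b2)
       (a1*d2 + b1*c2 - c1*b2 + d1*a2)"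
instance ..
end

fun qconj :: "quat \<Rightarrow> quat" where
  "qconj (Q a b c d) = Q a (-b) (-c) (-d)"

section \<open>Octonions by Cayley--Dickson doubling: (a + b l)(c + d l) = (ac - conj(d) b) + (da + b conj(c)) l\<close>

datatype oct = Oct quat quat

instantiation oct :: "{zero, one, plus, minus, uminus, times}"
begin
definition "0 = Oct 0 0"
definition "1 = Oct 1 0"
fun plus_oct where "Oct a b + Oct c d = Oct (a + c) (b + d)"
fun minus_oct where "Oct a b - Oct c d = Oct (a - c) (b - d)"
fun uminus_oct where "- Oct a b = Oct (-a) (-b)"
fun times_oct where "Oct a b * Oct c d = Oct (a*c - qconj d * b) (d*a + b * qconj c)"
instance ..
end

fun oconj :: "oct \<Rightarrow> oct" where
  "oconj (Oct a b) = Oct (qconj a) (- b)"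

text \<open>Octonion with real coordinates w.r.t. the basis 1,i,j,k,l,il,jl,kl.
  (Note (a + 0 l)(0 + 1 l) = a l, so the coordinates of a l are in the second quaternion.)\<close>
definition ov :: "real \<Rightarrow> real \<Rightarrow> real \<Rightarrow> real \<Rightarrow> real \<Rightarrow> real \<Rightarrow> real \<Rightarrow> real \<Rightarrow> oct" where
  "ov r0 r1 r2 r3 r4 r5 r6 r7 = Oct (Q r0 r1 r2 r3) (Q r4 r5 r6 r7)"

datatype idx = I1 | I2 | I3

type_synonym ovec = "idx \<Rightarrow> oct"
type_synonym omat = "idx \<Rightarrow> idx \<Rightarrow> oct"

definition mvmul :: "omat \<Rightarrow> ovec \<Rightarrow> ovec" where
  "mvmul A y = (\<lambda>i. A i I1 * y I1 + A i I2 * y I2 + A i I3 * y I3)"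

text \<open>x x^dagger : entries x_i conj(x_j)\<close>
definition outer :: "ovec \<Rightarrow> omat" where
  "outer x = (\<lambda>i j. x i * oconj (x j))"

definition rsmul :: "ovec \<Rightarrow> oct \<Rightarrow> ovec" where
  "rsmul u \<mu> = (\<lambda>i. u i * \<mu>)"

definition orth :: "ovec \<Rightarrow> ovec \<Rightarrow> bool" where
  "orth x y \<longleftrightarrow> mvmul (outer x) y = (\<lambda>_. 0)"

definition Bhat :: "real \<Rightarrow> real \<Rightarrow> omat" where
  "Bhat p q = (\<lambda>i j. case (i, j) of
      (I1, I1) \<Rightarrow> ov p 0 0 0 0 0 0 0
    | (I1, I2) \<Rightarrow> ov 0 q 0 0 0 0 0 0
    | (I1, I3) \<Rightarrow> ov 0 0 0 (q/6 * sqrt 5) (q/6 * 2) 0 0 0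
    | (I2, I1) \<Rightarrow> ov 0 (-q) 0 0 0 0 0 0
    | (I2, I2) \<Rightarrow> ov p 0 0 0 0 0 0 0
    | (I2, I3) \<Rightarrow> ov 0 0 (q/2) 0 0 0 0 0
    | (I3, I1) \<Rightarrow> ov 0 0 0 (-(q/6) * sqrt 5) (-(q/6) * 2) 0 0 0
    | (I3, I2) \<Rightarrow> ov 0 0 (-(q/2)) 0 0 0 0 0
    | (I3, I3) \<Rightarrow> ov p 0 0 0 0 0 0 0)"

definition w1 :: ovec where
  "w1 = (\<lambda>i. case i of
      I1 \<Rightarrow> ov 0 0 0 3 0 0 0 0
    | I2 \<Rightarrow> ov 0 0 (sqrt 5) 0 0 (-2) 0 0
    | I3 \<Rightarrow> ov (-7) 0 0 0 0 0 0 (- sqrt 5))"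

end

theory Submission
  imports Defs
begin

(* Write Bhat p q = p + q A with A = Bhat 0 1. An eigenvector u of Bhat p q is then an
   eigenvector A u = u \<alpha> of A. Orthogonality to w1 is a real-linear condition confining u
   to an 8-dimensional space, parametrised by w1_perp. Since conj(x) (x \<alpha>) = |x|^2 \<alpha> in
   the octonions, an eigenvector attains equality |u|^2 |A u|^2 = |\<Sum> conj(u_i) (A u)_i|^2 in
   the Cauchy-Schwarz inequality. On w1_perp a b c d e f g k an explicit sum-of-squares
   certificate bounds the gap from below by 3 S (S + e^2 + g^2), where
   S = a^2 + b^2 + c^2 + d^2 + f^2 + k^2, so only the two-parameter family
   w1_perp 0 0 0 0 e 0 g 0 survives. For two members u, v of that family the second component
   of (u u^\<dagger>) v is |u|^2 v_2, so they are never orthogonal unless one of them vanishes. *)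

lemma oct_induct: "(\<And>x0 x1 x2 x3 x4 x5 x6 x7. P (Oct (Q x0 x1 x2 x3) (Q x4 x5 x6 x7))) \<Longrightarrow> P x"
  by (metis oct.exhaust quat.exhaust)

lemma oct_coordinates:
  obtains x0 x1 x2 x3 x4 x5 x6 x7 where "x = Oct (Q x0 x1 x2 x3) (Q x4 x5 x6 x7)"
  by (induct x rule: oct_induct) blast

fun onorm2 :: "oct \<Rightarrow> real" where
  "onorm2 (Oct (Q a b c d) (Q e f g h)) = a*a + b*b + c*c + d*d + e*e + f*f + g*g + h*h"

fun oscale :: "real \<Rightarrow> oct \<Rightarrow> oct" where
  "oscale t (Oct (Q a b c d) (Q e f g h)) =
     Oct (Q (t*a) (t*b) (t*c) (t*d)) (Q (t*e) (t*f) (t*g) (t*h))"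

lemma onorm2_mult: "onorm2 (x * y) = onorm2 x * onorm2 y"
  by (induct x rule: oct_induct, induct y rule: oct_induct) (simp, algebra)

lemma oconj_times_times: "oconj x * (x * y) = oscale (onorm2 x) y"
  by (induct x rule: oct_induct, induct y rule: oct_induct) (simp, algebra)

lemma onorm2_oscale: "onorm2 (oscale t x) = t^2 * onorm2 x"
  by (induct x rule: oct_induct) (simp, algebra)

lemma oscale_add_left: "oscale s x + oscale t x = oscale (s + t) x"
  by (induct x rule: oct_induct) (simp add: algebra_simps)

lemma oscale_inverse: "t \<noteq> 0 \<Longrightarrow> oscale (1/t) (oscale t x) = x"
  by (induct x rule: oct_induct) simp

lemma oct_add_diff_cancel_left: "x + y - x = (y::oct)"
  by (induct x rule: oct_induct, induct y rule: oct_induct) simp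

lemma times_oscale_minus_one: "x * oscale t (y - oscale p 1) = oscale t (x * y - oscale p x)"
  by (induct x rule: oct_induct, induct y rule: oct_induct)
    (simp add: one_oct_def one_quat_def zero_quat_def algebra_simps)

definition vnorm2 :: "ovec \<Rightarrow> real" where
  "vnorm2 u = onorm2 (u I1) + onorm2 (u I2) + onorm2 (u I3)"

definition vinner :: "ovec \<Rightarrow> ovec \<Rightarrow> oct" where
  "vinner u v = oconj (u I1) * v I1 + oconj (u I2) * v I2 + oconj (u I3) * v I3"

lemma onorm2_vinner_rsmul: "onorm2 (vinner u (rsmul u \<alpha>)) = vnorm2 u * vnorm2 (rsmul u \<alpha>)"
proof -
  have "vinner u (rsmul u \<alpha>) = oscale (vnorm2 u) \<alpha>"
    by (simp add: vinner_def vnorm2_def rsmul_def oconj_times_times oscale_add_left)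
  moreover have "vnorm2 (rsmul u \<alpha>) = vnorm2 u * onorm2 \<alpha>"
    by (simp add: vnorm2_def rsmul_def onorm2_mult algebra_simps)
  ultimately show ?thesis
    by (simp add: onorm2_oscale power2_eq_square)
qed

lemma mvmul_Bhat: "mvmul (Bhat p q) u i = oscale p (u i) + oscale q (mvmul (Bhat 0 1) u i)"
proof -
  obtain x0 x1 x2 x3 x4 x5 x6 x7 where "u I1 = Oct (Q x0 x1 x2 x3) (Q x4 x5 x6 x7)"
    by (rule oct_coordinates)
  moreover obtain y0 y1 y2 y3 y4 y5 y6 y7 where "u I2 = Oct (Q y0 y1 y2 y3) (Q y4 y5 y6 y7)"
    by (rule oct_coordinates)
  moreover obtain z0 z1 z2 z3 z4 z5 z6 z7 where "u I3 = Oct (Q z0 z1 z2 z3) (Q z4 z5 z6 z7)"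
    by (rule oct_coordinates)
  ultimately show ?thesis
    by (cases i) (simp_all add: mvmul_def Bhat_def ov_def algebra_simps)
qed

lemma Bhat_eigenvector_normalize:
  assumes "q \<noteq> 0" and "mvmul (Bhat p q) u = rsmul u \<mu>"
  shows "mvmul (Bhat 0 1) u = rsmul u (oscale (1/q) (\<mu> - oscale p 1))"
proof
  fix i
  have "u i * \<mu> = oscale p (u i) + oscale q (mvmul (Bhat 0 1) u i)"
    using assms(2) mvmul_Bhat[of p q u i] by (simp add: rsmul_def fun_eq_iff)
  then show "mvmul (Bhat 0 1) u i = rsmul u (oscale (1/q) (\<mu> - oscale p 1)) i"
    using assms(1)
    by (simp add: rsmul_def times_oscale_minus_one oct_add_diff_cancel_left oscale_inverse)
qed

lemma orth_iff:
  "orth x y \<longleftrightarrow>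
     mvmul (outer x) y I1 = 0 \<and> mvmul (outer x) y I2 = 0 \<and> mvmul (outer x) y I3 = 0"
  unfolding orth_def fun_eq_iff by (metis idx.exhaust)

(* algebra exploits this fact only in the form p = 0, not as sqrt 5 * sqrt 5 = 5. *)
lemma sqrt5_square: "sqrt 5 * sqrt 5 - 5 = (0::real)"
  by simp

(* The parameters d, e, f, k are the coordinates of u I3 and u I2 divided by sqrt 5, which makes
   all the polynomial identities below rational. *)
definition w1_perp :: "real \<Rightarrow> real \<Rightarrow> real \<Rightarrow> real \<Rightarrow> real \<Rightarrow> real \<Rightarrow> real \<Rightarrow> real \<Rightarrow> ovec" where
  "w1_perp a b c d e f g k = (\<lambda>i. case i of
      I1 \<Rightarrow> Oct (Q (-(7/3)*(a+b)) (-3*c + 15/2*d) (5/3*e - 10*f) (3/2*g + 18*k))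
               (Q 0 (sqrt 5*(4*f - 2/3*e)) (sqrt 5*(3/5*c - 3/2*d)) (-(sqrt 5/3)*(a+b)))
    | I2 \<Rightarrow> Oct (Q (7/5*sqrt 5*c) (- sqrt 5*a) (-(sqrt 5/2)*g) (sqrt 5*e)) (Q 0 g a c)
    | I3 \<Rightarrow> Oct (Q (7*k) (-5*f) (-(5/2)*d) b) (Q 0 (sqrt 5*d) (sqrt 5*f) (sqrt 5*k)))"

lemma vnorm2_w1_perp:
  "vnorm2 (w1_perp a b c d e f g k) =
      12*a*a + 12*a*b + 7*b*b + (108/5)*c*c - 54*c*d + (315/4)*d*d + 10*e*e - 60*e*f + 210*f*f
      + (9/2)*g*g + 54*g*k + 378*k*k"
  unfolding vnorm2_def w1_perp_def idx.case onorm2.simps using sqrt5_square by algebra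

(* Sixteen of the 24 real equations, in four decoupled blocks; each block expresses four
   coordinates of u in terms of two others. *)
lemma orth_w1_equations:
  assumes "orth w1 u"
    and "u I1 = Oct (Q u10 u11 u12 u13) (Q u14 u15 u16 u17)"
    and "u I2 = Oct (Q u20 u21 u22 u23) (Q u24 u25 u26 u27)"
    and "u I3 = Oct (Q u30 u31 u32 u33) (Q u34 u35 u36 u37)"
  shows "9*u10 - 3*u21*sqrt 5 + 6*u26 + 21*u33 + 3*u34*sqrt 5 = 0"
    and "9*u17 - 6*u21 - 3*u26*sqrt 5 + 3*u33*sqrt 5 - 21*u34 = 0"
    and "- 3*u10*sqrt 5 - 6*u17 + 9*u21 - 9*u33*sqrt 5 - 9*u34 = 0"
    and "3*u10*sqrt 5 - 21*u17 - 9*u21 - 9*u26*sqrt 5 + 54*u34 = 0"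
    and "9*u11 + 3*u20*sqrt 5 + 6*u27 + 21*u32 - 3*u35*sqrt 5 = 0"
    and "9*u16 - 6*u20 + 3*u27*sqrt 5 + 3*u32*sqrt 5 + 21*u35 = 0"
    and "3*u11*sqrt 5 - 6*u16 + 9*u20 + 9*u32*sqrt 5 - 9*u35 = 0"
    and "21*u11 + 3*u16*sqrt 5 + 9*u20*sqrt 5 - 9*u27 + 54*u32 = 0"
    and "9*u12 - 3*u23*sqrt 5 + 6*u24 - 21*u31 - 3*u36*sqrt 5 = 0"
    and "9*u15 + 6*u23 + 3*u24*sqrt 5 + 3*u31*sqrt 5 - 21*u36 = 0"
    and "6*u12 + 3*u15*sqrt 5 + 9*u24 + 9*u31 + 9*u36*sqrt 5 = 0"
    and "- 21*u12 + 3*u15*sqrt 5 + 9*u23*sqrt 5 + 9*u24 + 54*u31 = 0"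
    and "9*u13 + 3*u22*sqrt 5 - 6*u25 - 21*u30 - 3*u37*sqrt 5 = 0"
    and "9*u14 - 6*u22 - 3*u25*sqrt 5 - 3*u30*sqrt 5 + 21*u37 = 0"
    and "3*u13*sqrt 5 - 6*u14 + 9*u22 - 9*u30*sqrt 5 + 9*u37 = 0"
    and "- 21*u13 - 3*u14*sqrt 5 - 9*u22*sqrt 5 + 9*u25 + 54*u30 = 0"
  using assms
  by (simp_all add: orth_iff mvmul_def outer_def w1_def ov_def zero_oct_def zero_quat_def
      algebra_simps)

lemma orth_w1_imp_w1_perp:
  assumes "orth w1 u"
  obtains a b c d e f g k where "u = w1_perp a b c d e f g k"
proof -
  obtain u10 u11 u12 u13 u14 u15 u16 u17
    where U1: "u I1 = Oct (Q u10 u11 u12 u13) (Q u14 u15 u16 u17)"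
    by (rule oct_coordinates)
  obtain u20 u21 u22 u23 u24 u25 u26 u27
    where U2: "u I2 = Oct (Q u20 u21 u22 u23) (Q u24 u25 u26 u27)"
    by (rule oct_coordinates)
  obtain u30 u31 u32 u33 u34 u35 u36 u37
    where U3: "u I3 = Oct (Q u30 u31 u32 u33) (Q u34 u35 u36 u37)"
    by (rule oct_coordinates)
  note eqs = orth_w1_equations[OF assms U1 U2 U3]
  define d e f k where "d = u35 / sqrt 5" and "e = u23 / sqrt 5" and "f = u36 / sqrt 5"
    and "k = u37 / sqrt 5"
  have params: "u35 = sqrt 5 * d" "u23 = sqrt 5 * e" "u36 = sqrt 5 * f" "u37 = sqrt 5 * k"
    by (simp_all add: d_def e_def f_def k_def)
  have "u10 = -(7/3)*(u26+u33) \<and> u17 = -(sqrt 5/3)*(u26+u33) \<and> u21 = - sqrt 5*u26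
      \<and> u34 = 0"
    using eqs(1-4) sqrt5_square by algebra
  moreover have "u11 = -3*u27 + 15/2*d \<and> u16 = sqrt 5*(3/5*u27 - 3/2*d) \<and> u20 = 7/5*sqrt 5*u27
      \<and> u32 = -(5/2)*d"
    using eqs(5-8) params(1) sqrt5_square by algebra
  moreover have "u12 = 5/3*e - 10*f \<and> u15 = sqrt 5*(4*f - 2/3*e) \<and> u24 = 0 \<and> u31 = -5*f"
    using eqs(9-12) params(2,3) sqrt5_square by algebra
  moreover have "u13 = 3/2*u25 + 18*k \<and> u14 = 0 \<and> u22 = -(sqrt 5/2)*u25 \<and> u30 = 7*k"
    using eqs(13-16) params(4) sqrt5_square by algebra
  ultimately have "u i = w1_perp u26 u33 u27 d e f u25 k i" for i
    using U1 U2 U3 params by (cases i) (simp_all add: w1_perp_def)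
  then show thesis
    by (intro that ext)
qed

lemma vnorm2_Bhat_w1_perp:
  "vnorm2 (mvmul (Bhat 0 1) (w1_perp a b c d e f g k)) =
      13*a*a + (43/3)*a*b + (31/3)*b*b + (117/5)*c*c - (105/2)*c*d + (405/4)*d*d + 10*e*e - 60*e*f
      + 270*f*f + (9/2)*g*g + 54*g*k + 558*k*k"
  unfolding vnorm2_def w1_perp_def mvmul_def Bhat_def ov_def
  by (simp only: prod.case idx.case times_oct.simps times_quat.simps plus_oct.simps
      plus_quat.simps minus_quat.simps uminus_quat.simps qconj.simps onorm2.simps)
    (use sqrt5_square in algebra)

lemma onorm2_vinner_Bhat_w1_perp:
  "onorm2 (vinner (w1_perp a b c d e f g k) (mvmul (Bhat 0 1) (w1_perp a b c d e f g k))) =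
      5*(- 4*a*a - 4*a*b + b*b - (36/5)*c*c + 18*c*d + (45/4)*d*d - (10/3)*e*e + 20*e*f + 30*f*f
      - (3/2)*g*g - 18*g*k + 54*k*k)^2 + 5*(a*d - (2/5)*b*c + b*d + 12*f*k)^2
      + 5*(- (4/3)*a*e + (19/3)*a*f - (4/9)*b*e + b*f - (6/5)*c*g - 3*c*k + 2*d*g - (9/2)*d*k)^2
      + 5*((2/3)*a*g + a*k + (2/3)*b*g - (4/3)*c*e + 7*c*f)^2
      + (- (14/3)*a*g - 31*a*k - (8/3)*b*g + (28/3)*c*e - 25*c*f - 10*d*e)^2
      + (- (20/3)*a*e + (55/3)*a*f - (40/9)*b*e + 5*b*f - 6*c*g - 39*c*k + 5*d*g - (45/2)*d*k)^2
      + ((5/2)*a*d - b*c + (5/2)*b*d + 30*f*k)^2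
      + (- a*b - (9/2)*c*d + (45/4)*d*d + (20/3)*e*e - 40*e*f + 30*f*f + 3*g*g + 36*g*k)^2"
  unfolding vinner_def w1_perp_def mvmul_def Bhat_def ov_def
  by (simp only: prod.case idx.case times_oct.simps times_quat.simps plus_oct.simps
      plus_quat.simps minus_quat.simps uminus_quat.simps qconj.simps oconj.simps onorm2.simps)
    (use sqrt5_square in algebra)

lemma w1_perp_sos_identity:
  fixes a b c d e f g k :: real
  shows "(12*a*a + 12*a*b + 7*b*b + (108/5)*c*c - 54*c*d + (315/4)*d*d + 10*e*e - 60*e*f + 210*f*f
      + (9/2)*g*g + 54*g*k + 378*k*k) *
    (13*a*a + (43/3)*a*b + (31/3)*b*b + (117/5)*c*c - (105/2)*c*d + (405/4)*d*d + 10*e*e - 60*e*f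
      + 270*f*f + (9/2)*g*g + 54*g*k + 558*k*k) -
    (5*(- 4*a*a - 4*a*b + b*b - (36/5)*c*c + 18*c*d + (45/4)*d*d - (10/3)*e*e + 20*e*f + 30*f*f
      - (3/2)*g*g - 18*g*k + 54*k*k)^2 + 5*(a*d - (2/5)*b*c + b*d + 12*f*k)^2
      + 5*(- (4/3)*a*e + (19/3)*a*f - (4/9)*b*e + b*f - (6/5)*c*g - 3*c*k + 2*d*g - (9/2)*d*k)^2
      + 5*((2/3)*a*g + a*k + (2/3)*b*g - (4/3)*c*e + 7*c*f)^2
      + (- (14/3)*a*g - 31*a*k - (8/3)*b*g + (28/3)*c*e - 25*c*f - 10*d*e)^2
      + (- (20/3)*a*e + (55/3)*a*f - (40/9)*b*e + 5*b*f - 6*c*g - 39*c*k + 5*d*g - (45/2)*d*k)^2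
      + ((5/2)*a*d - b*c + (5/2)*b*d + 30*f*k)^2
      + (- a*b - (9/2)*c*d + (45/4)*d*d + (20/3)*e*e - 40*e*f + 30*f*f + 3*g*g + 36*g*k)^2) =
    3 * (a^2 + b^2 + c^2 + d^2 + f^2 + k^2) * (a^2 + b^2 + c^2 + d^2 + f^2 + k^2 + e^2 + g^2) +
      (73 * (a*a + (84/73)*a*b + (239/730)*b*b - (2017/3650)*c*c + (1013/730)*c*d - (1589/1825)*d*d
      - (559/2628)*e*f + (3167/10950)*f*f + (12/365)*g*k)^2
      + (71373/365) * (a*b + (229217/428238)*b*b + (9923/713730)*c*c - (15961/142746)*c*d
      + (175931/5709840)*d*d - (444926/1927071)*e*f + (2305819/4282380)*f*f + (23228/71373)*g*k
      + (114172/71373)*k*k)^2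
      + (15602873/32117850) * (b*b - (1277949/78014365)*c*c + (316386789/62411492)*c*d
      - (14223239421/1248229840)*d*d - (6045637795/561703428)*e*f + (4799190647/312057460)*f*f
      + (126911388/15602873)*g*k - (117811704/15602873)*k*k)^2
      + (430853986358/1950359125) * (c*c - (7715262147475/3446831890864)*c*d
      + (7759687140789/6893663781728)*d*d - (2277613365895/15510743508888)*e*f
      + (1917417790157/5170247836296)*f*f - (43663822545/861707972716)*g*k
      - (101427402972/215426993179)*k*k)^2
      + (2894139692742729479/689366378172800) * (c*d - (7016757629206444919/5788279385485458958)*d*d
      + (248163657370669430/8682419078228188437)*e*f - (329531047560420402/2894139692742729479)*f*f
      - (159520597117956220/2894139692742729479)*g*k
      - (1041246155430193856/2894139692742729479)*k*k)^2
      + (119127977174767418499575207/185224940335534686656000) * (d*d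
      - (57585158790959981983952860/357383931524302255498725621)*e*f
      - (44687062971251901638069564/357383931524302255498725621)*f*f
      + (507677384429618224309520/119127977174767418499575207)*g*k
      - (164955426879114547033729024/119127977174767418499575207)*k*k)^2
      + (3069717522250074092755200191531221/578961969069369653907935506020) * (e*f
      - (716044650309193117064520944754090/236132117096159545596553860887017)*f*f
      + (83396444816996683193049718500441/3069717522250074092755200191531221)*g*k
      + (30188247455873600647396673173848/3069717522250074092755200191531221)*k*k)^2
      + (120578561681839423307401515448157807624/53129726346635897759224618699578825) * (f*f
      + (29148733329763517445601698106640258265/241157123363678846614803030896315615248)*g*k
      - (107513551947958341487538723434817814909/241157123363678846614803030896315615248)*k*k)^2
      + (154108239690783957564586571707437556943937071/31350426037278250059924394016521029982240) *
      (g*k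
      +
      (943528337661715251311791314686821648253033293/154108239690783957564586571707437556943937071)*k*k)^2
      +
      (142885161496181652149883014886267341446765449022281/15410823969078395756458657170743755694393707100)
      * (k*k)^2
      + (8707/25) * (a*c - (20365/17414)*a*d + (9745/17414)*b*c - (5515/8707)*b*d + (305/17414)*e*k
      + (165/17414)*f*g + (5/17414)*f*k)^2
      + (2022025209/870700) * (a*d + (3432885/674008403)*b*c + (4200271865/8088100836)*b*d
      - (694033975/6066075627)*e*k - (68559595/2022025209)*f*g + (258438515/2022025209)*f*k)^2
      + (12320614496483/33700420150) * (b*c - (122633972864585/98564915971864)*b*d
      - (3810180713725/12320614496483)*e*k - (1117022611055/12320614496483)*f*g
      + (15589707870320/36961843489449)*f*k)^2
      + (12658288108807975657/118277899166236800) * (b*d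
      - (15183420266133863120/37974864326423926971)*e*k
      - (1544494321977373040/12658288108807975657)*f*g
      + (6100231109100293240/12658288108807975657)*f*k)^2
      + (1261648894504943245508417/113924592979271780913) * (e*k
      - (60059975709164217404451/6308244472524716227542085)*f*g
      - (7635849278985177077457101/2523297789009886491016834)*f*k)^2
      + (76288649954911264662021952748/31541222362623581137710425) * (f*g
      + (678270286516023133179964678985/114432974932366896993032929122)*f*k)^2
      + (283642979049815147457085948004713949/17164946239855034548954939368300) * (f*k)^2
      + (181/3) * (a*e - (6121/2172)*a*f + (1055/1629)*b*e - (30109/16290)*b*f + (3/905)*c*g
      + (141/905)*c*k - (27/1810)*d*g - (703/1810)*d*k)^2
      + (11935900487/1954800) * (a*f - (57462940/35807701461)*b*e + (18694645610/35807701461)*b*f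
      + (2274660/11935900487)*c*g + (40836780/11935900487)*c*k - (129283290/11935900487)*d*g
      - (857059410/11935900487)*d*k)^2
      + (152373186662791/966807939447) * (b*e - (4676846432479051/1523731866627910)*b*f
      + (104417613/227490574295)*c*g - (351213574846041/761865933313955)*c*k
      + (3271386469032/761865933313955)*d*g + (340345528504776/761865933313955)*d*k)^2
      + (280576966567840404397/1234222811968607100) * (b*f
      - (636629196423071016/280576966567840404397)*c*g
      + (6953345416031951268/280576966567840404397)*c*k
      - (6118768804610868012/280576966567840404397)*d*g
      - (48641209915179519180/280576966567840404397)*d*k)^2
      + (677564077465886738495097/14028848328392020219850) * (c*g
      + (1527792974354900776044183/225854692488628912831699)*c*k
      - (918814224416285724139775/903418769954515651326796)*d*g
      - (3870005174920790766286483/677564077465886738495097)*d*k)^2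
      + (47808913369750217275710453459/2258546924886289128316990) * (c*k
      - (2090692566436290950789283041/191235653479000869102841813836)*d*g
      - (62240265359011179787452280832/47808913369750217275710453459)*d*k)^2
      + (15488579689824540824633246834020097/19123565347900086910284181383600) * (d*g
      + (92011176561635916137308513207489574/15488579689824540824633246834020097)*d*k)^2
      + (7122092492368583535165527403045375049963/929314781389472449477994810041205820) * (d*k)^2
      + (51/2) * (a*g + (1646/255)*a*k + (211/306)*b*g + (1016/255)*b*k - (2/255)*c*e + (41/255)*c*f
      + (3/85)*d*e - (88/255)*d*f)^2
      + (14962792/1275) * (a*k + (149185/89776752)*b*g + (7864687/14962792)*b*k
      + (4567/29925584)*c*e - (53461/29925584)*c*f - (254417/14962792)*d*e
      + (1408883/29925584)*d*f)^2
      + (12301175611/179553504) * (b*g + (394023233054/61505878055)*b*k - (58415609/61505878055)*c*e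
      - (22078155421/61505878055)*c*f - (1317028862/184517634165)*d*e
      + (22309398179/61505878055)*d*f)^2
      + (885333202593133/1845176341650) * (b*k - (7851833843267/1770666405186266)*c*e
      + (141323489561287/1770666405186266)*c*f - (5109281479297/139789453041021)*d*e
      + (2478831533273/93192968694014)*d*f)^2
      + (4913097349923515089/44266660129656650) * (c*e
      - (43215528377403261692/14739292049770545267)*c*f
      - (29005477300370429651/29478584099541090534)*d*e
      + (25995760543698063407/9826194699847030178)*d*f)^2
      + (4828633970287946488868821/442178761493116358010) * (c*f
      + (178841397188298783219473/9657267940575892977737642)*d*e
      - (12283977281228696406343929/9657267940575892977737642)*d*f)^2
      + (1570327829355620779168898403551/869154114651830367996387780) * (d*e
      - (4610519140184901756797965470561/1570327829355620779168898403551)*d*f)^2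
      + (26923301831501974341741303449344384/7851639146778103895844492017755) * (d*f)^2)"
  by algebra

lemma w1_perp_Cauchy_Schwarz_gap:
  assumes "u = w1_perp a b c d e f g k"
    and "S = a^2 + b^2 + c^2 + d^2 + f^2 + k^2"
  shows "3 * S * (S + e^2 + g^2) \<le>
    vnorm2 u * vnorm2 (mvmul (Bhat 0 1) u) - onorm2 (vinner u (mvmul (Bhat 0 1) u))"
  unfolding assms vnorm2_w1_perp vnorm2_Bhat_w1_perp onorm2_vinner_Bhat_w1_perp
    w1_perp_sos_identity le_add_same_cancel1
  by (intro add_nonneg_nonneg mult_nonneg_nonneg) simp_all

lemma w1_perp_eigenvector:
  assumes "mvmul (Bhat 0 1) (w1_perp a b c d e f g k) = rsmul (w1_perp a b c d e f g k) \<alpha>"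
  shows "w1_perp a b c d e f g k = w1_perp 0 0 0 0 e 0 g 0"
proof -
  define S where "S = a^2 + b^2 + c^2 + d^2 + f^2 + k^2"
  have "3 * S * (S + e^2 + g^2) \<le> 0"
    using w1_perp_Cauchy_Schwarz_gap[OF refl S_def, of e g] assms by (simp add: onorm2_vinner_rsmul)
  moreover have "S * S \<le> S * (S + e^2 + g^2)"
    by (simp add: S_def mult_left_mono)
  ultimately have "S * S \<le> 0"
    by linarith
  then have "S = 0"
    by (meson mult_eq_0_iff order_antisym zero_le_square)
  then have "a = 0 \<and> b = 0 \<and> c = 0 \<and> d = 0 \<and> f = 0 \<and> k = 0"
    by (simp add: S_def add_nonneg_eq_0_iff)
  then show ?thesis
    by simp
qed

lemma Bhat_eigenvector_orth_w1:
  assumes "q \<noteq> 0" and "orth w1 u" and "mvmul (Bhat p q) u = rsmul u \<mu>"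
  obtains e g where "u = w1_perp 0 0 0 0 e 0 g 0"
proof -
  obtain a b c d e f g k where u: "u = w1_perp a b c d e f g k"
    using orth_w1_imp_w1_perp[OF assms(2)] .
  have "mvmul (Bhat 0 1) u = rsmul u (oscale (1/q) (\<mu> - oscale p 1))"
    using Bhat_eigenvector_normalize[OF assms(1,3)] .
  then have "u = w1_perp 0 0 0 0 e 0 g 0"
    unfolding u by (rule w1_perp_eigenvector)
  then show thesis
    by (rule that)
qed

lemma outer_w1_perp_family_I2:
  "mvmul (outer (w1_perp 0 0 0 0 e 0 g 0)) (w1_perp 0 0 0 0 e' 0 g' 0) I2 =
     oscale (vnorm2 (w1_perp 0 0 0 0 e 0 g 0)) (w1_perp 0 0 0 0 e' 0 g' 0 I2)"
  unfolding vnorm2_def outer_def w1_perp_def mvmul_def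
  apply (simp only: idx.case times_oct.simps times_quat.simps plus_oct.simps plus_quat.simps
      minus_quat.simps uminus_quat.simps qconj.simps oconj.simps onorm2.simps oscale.simps
      oct.inject quat.inject)
  using sqrt5_square apply (intro conjI)
  \<comment> \<open>algebra fails on the components that hold without the premise, hence the retry\<close>
  apply (algebra | (thin_tac "_ = 0", algebra))+
  done

lemma orth_w1_perp_family:
  assumes "orth (w1_perp 0 0 0 0 e 0 g 0) (w1_perp 0 0 0 0 e' 0 g' 0)"
  shows "w1_perp 0 0 0 0 e 0 g 0 = (\<lambda>_. 0) \<or> w1_perp 0 0 0 0 e' 0 g' 0 = (\<lambda>_. 0)"
proof (cases "e = 0 \<and> g = 0")
  case True
  then show ?thesis
    by (simp add: w1_perp_def fun_eq_iff zero_oct_def zero_quat_def split: idx.split)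
next
  case False
  then have "0 < e^2 + g^2"
    by (simp add: sum_power2_gt_zero_iff)
  moreover have "vnorm2 (w1_perp 0 0 0 0 e 0 g 0) = 10 * e^2 + 9/2 * g^2"
    by (simp add: vnorm2_w1_perp power2_eq_square)
  ultimately have "0 < vnorm2 (w1_perp 0 0 0 0 e 0 g 0)"
    using zero_le_power2[of e] by linarith
  moreover have "oscale (vnorm2 (w1_perp 0 0 0 0 e 0 g 0)) (w1_perp 0 0 0 0 e' 0 g' 0 I2) = 0"
    using assms by (simp add: orth_iff outer_w1_perp_family_I2)
  ultimately have "e' = 0 \<and> g' = 0"
    by (simp add: w1_perp_def zero_oct_def zero_quat_def)
  then show ?thesis
    by (simp add: w1_perp_def fun_eq_iff zero_oct_def zero_quat_def split: idx.split)
qed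

theorem mainTheorem12:
  fixes p q :: real
  assumes "q \<noteq> 0"
  shows "\<not> (\<exists>u v :: ovec. \<exists>\<mu> \<nu> :: oct.
            u \<noteq> (\<lambda>_. 0) \<and> v \<noteq> (\<lambda>_. 0) \<and>
            mvmul (Bhat p q) u = rsmul u \<mu> \<and> mvmul (Bhat p q) v = rsmul v \<nu> \<and>
            orth w1 u \<and> orth u w1 \<and> orth w1 v \<and> orth v w1 \<and> orth u v \<and> orth v u)"
proof (intro notI, elim exE conjE)
  fix u v \<mu> \<nu>
  assume nonzero: "u \<noteq> (\<lambda>_. 0)" "v \<noteq> (\<lambda>_. 0)"
    and eigen: "mvmul (Bhat p q) u = rsmul u \<mu>" "mvmul (Bhat p q) v = rsmul v \<nu>"
    and orth: "orth w1 u" "orth u w1" "orth w1 v" "orth v w1" "orth u v" "orth v u"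
  obtain e g where u: "u = w1_perp 0 0 0 0 e 0 g 0"
    using Bhat_eigenvector_orth_w1[OF assms orth(1) eigen(1)] .
  obtain e' g' where v: "v = w1_perp 0 0 0 0 e' 0 g' 0"
    using Bhat_eigenvector_orth_w1[OF assms orth(3) eigen(2)] .
  show False
    using orth_w1_perp_family[of e g e' g'] orth(5) nonzero unfolding u v by blast
qed

end
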